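(* Let $M$ be a finite abelian group of order $m$, $J\colon M\times M\to\mathbf{C}$, $c\in\hat{M}$ with $c^2=1$, and $i\colon\hat{M}\setminus\{c\}\to\hat{M}\setminus\{1\}$ a bijection with $i(x)=x\,i(x^{-1})$ for all $x\ne c$, such that $J(\alpha,\beta)=\frac{1}{m}\sum_{x\in\hat{M}\setminus\{c\}}\alpha(i(x))\beta(i(x)x^{-1})$ for all $\alpha,\beta\in M$. Let $F=\hat{M}\sqcup\{0\}$ with the operation $\oplus$ for which $0$ is the identity and, for $x,y\ne0$, $x\oplus y=0$ if $x=cy$ and $x\oplus y=x\,i(x/y)^{-1}$ otherwise. Then \[ J(\alpha,\beta)=\frac{1}{m}\sum_{\substack{x\oplus y=1,\\ x,y\in F\setminus\{0\}}}\alpha(x)\beta(y)\quad\text{for all }\alpha,\beta\in M. \]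
   Context: $\hat{M}$ is the Pontryagin dual of $M$, written multiplicatively with identity $1$; for $\alpha\in M$, $x\in\hat{M}$, $\alpha(x)$ is the value of the character $x$ at $\alpha$. (In the paper, $J$ is a Jacobi function, but this is not used.) *)

theory Defs
  imports Complex_Main "HOL-Algebra.Group"
begin

text \<open>Pontryagin dual of a finite abelian group M: characters M \<rightarrow> S^1,
  represented as functions on the carrier, extended by 1 outside the carrier.\<close>
definition dual :: "('a, 'b) monoid_scheme \<Rightarrow> ('a \<Rightarrow> complex) set" where
  "dual M = {\<chi>. (\<forall>a\<in>carrier M. \<forall>b\<in>carrier M. \<chi> (a \<otimes>\<^bsub>M\<^esub> b) = \<chi> a * \<chi> b)
              \<and> (\<forall>a\<in>carrier M. cmod (\<chi> a) = 1)
              \<and> (\<forall>a. a \<notin> carrier M \<longrightarrow> \<chi> a = 1)}"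

definition char_mult :: "('a \<Rightarrow> complex) \<Rightarrow> ('a \<Rightarrow> complex) \<Rightarrow> ('a \<Rightarrow> complex)" where
  "char_mult x y = (\<lambda>a. x a * y a)"

definition char_one :: "'a \<Rightarrow> complex" where
  "char_one = (\<lambda>a. 1)"

definition char_inv :: "('a \<Rightarrow> complex) \<Rightarrow> ('a \<Rightarrow> complex)" where
  "char_inv x = (\<lambda>a. inverse (x a))"

text \<open>The operation on F = dual M \<sqcup> {0}; None plays the role of 0.\<close>
definition F_oplus :: "('a \<Rightarrow> complex) \<Rightarrow> (('a \<Rightarrow> complex) \<Rightarrow> ('a \<Rightarrow> complex))
    \<Rightarrow> ('a \<Rightarrow> complex) option \<Rightarrow> ('a \<Rightarrow> complex) option \<Rightarrow> ('a \<Rightarrow> complex) option" where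
  "F_oplus c i u v = (case (u, v) of
      (None, _) \<Rightarrow> v
    | (_, None) \<Rightarrow> u
    | (Some x, Some y) \<Rightarrow>
        (if x = char_mult c y then None
         else Some (char_mult x (char_inv (i (char_mult x (char_inv y)))))))"

end

theory Submission
  imports Defs
begin

text \<open>The map \<open>z \<mapsto> (i z, i z / z)\<close> is a bijection from \<open>dual M - {c}\<close> onto the pairs
  of nonzero \<open>x, y\<close> with \<open>x \<oplus> y = 1\<close>, its inverse being \<open>(x, y) \<mapsto> x / y\<close>: indeed
  \<open>x \<oplus> y = 1\<close> says exactly that \<open>x / y \<noteq> c\<close> and \<open>i (x / y) = x\<close>. The claimed formula is
  therefore the defining sum of \<open>J\<close>, reindexed. Only the fact that \<open>i\<close> takes values in
  \<open>dual M\<close> is used.\<close>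

lemma dual_nonzero: "\<chi> \<in> dual M \<Longrightarrow> \<chi> a \<noteq> 0"
  unfolding dual_def by (cases "a \<in> carrier M") auto

lemma char_mult_dual: "x \<in> dual M \<Longrightarrow> y \<in> dual M \<Longrightarrow> char_mult x y \<in> dual M"
  unfolding dual_def char_mult_def by (auto simp: norm_mult)

lemma char_inv_dual: "x \<in> dual M \<Longrightarrow> char_inv x \<in> dual M"
  unfolding dual_def char_inv_def by (auto simp: norm_inverse)

lemma char_div_eq_iff:
  assumes "y \<in> dual M"
  shows "char_mult x (char_inv y) = z \<longleftrightarrow> x = char_mult z y"
proof -
  have "x a * inverse (y a) = z a \<longleftrightarrow> x a = z a * y a" for a
    using dual_nonzero[OF assms, of a] by (metis divide_eq_eq divide_inverse)
  then show ?thesis by (simp add: fun_eq_iff char_mult_def char_inv_def)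
qed

lemma char_div_div:
  assumes "x \<in> dual M" and "z \<in> dual M"
  shows "char_mult x (char_inv (char_mult x (char_inv z))) = z"
  using dual_nonzero[OF assms(1)] dual_nonzero[OF assms(2)]
  by (simp add: fun_eq_iff char_mult_def char_inv_def)

lemma char_mult_inv_eq_one_iff:
  assumes "x \<in> dual M"
  shows "char_mult x (char_inv w) = char_one \<longleftrightarrow> w = x"
proof -
  have "x a * inverse (w a) = 1 \<longleftrightarrow> w a = x a" for a
    using dual_nonzero[OF assms, of a] by (metis divide_eq_1_iff divide_inverse)
  then show ?thesis by (simp add: fun_eq_iff char_mult_def char_inv_def char_one_def)
qed

lemma F_oplus_eq_one_iff:
  assumes "x \<in> dual M" and "y \<in> dual M"
  shows "F_oplus c i (Some x) (Some y) = Some char_one \<longleftrightarrow>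
    char_mult x (char_inv y) \<noteq> c \<and> i (char_mult x (char_inv y)) = x"
  using char_div_eq_iff[OF assms(2)] char_mult_inv_eq_one_iff[OF assms(1)]
  by (auto simp: F_oplus_def)

lemma F_oplus_eq_one_pairs:
  assumes i_dual: "i ` (dual M - {c}) \<subseteq> dual M"
  shows "{(x, y). x \<in> dual M \<and> y \<in> dual M \<and> F_oplus c i (Some x) (Some y) = Some char_one}
    = (\<lambda>z. (i z, char_mult (i z) (char_inv z))) ` (dual M - {c})"
    (is "?S = ?g ` _")
proof
  show "?S \<subseteq> ?g ` (dual M - {c})"
  proof clarify
    fix x y
    assume x: "x \<in> dual M" and y: "y \<in> dual M"
      and "F_oplus c i (Some x) (Some y) = Some char_one"
    then have zc: "char_mult x (char_inv y) \<noteq> c" and ix: "i (char_mult x (char_inv y)) = x"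
      by (simp_all add: F_oplus_eq_one_iff)
    have "y = char_mult x (char_inv (char_mult x (char_inv y)))"
      using char_div_div[OF x y] by simp
    then have "(x, y) = ?g (char_mult x (char_inv y))"
      by (simp add: ix)
    moreover have "char_mult x (char_inv y) \<in> dual M - {c}"
      using x y zc by (simp add: char_mult_dual char_inv_dual)
    ultimately show "(x, y) \<in> ?g ` (dual M - {c})" by blast
  qed
next
  show "?g ` (dual M - {c}) \<subseteq> ?S"
  proof (rule image_subsetI)
    fix z
    assume z: "z \<in> dual M - {c}"
    then have iz: "i z \<in> dual M" using i_dual by blast
    have y: "char_mult (i z) (char_inv z) \<in> dual M"
      using iz z by (simp add: char_mult_dual char_inv_dual)
    show "?g z \<in> ?S"
      using iz y z by (simp add: F_oplus_eq_one_iff char_div_div)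
  qed
qed

lemma inj_on_F_oplus_eq_one_param:
  assumes i_dual: "i ` (dual M - {c}) \<subseteq> dual M"
  shows "inj_on (\<lambda>z. (i z, char_mult (i z) (char_inv z))) (dual M - {c})"
proof (rule inj_on_inverseI)
  fix z
  assume z: "z \<in> dual M - {c}"
  show "(\<lambda>(x, y). char_mult x (char_inv y)) (i z, char_mult (i z) (char_inv z)) = z"
    using char_div_div[of "i z"] i_dual z by auto
qed

theorem mainTheorem10:
  fixes M :: "('a, 'b) monoid_scheme"
    and J :: "'a \<Rightarrow> 'a \<Rightarrow> complex"
    and c :: "'a \<Rightarrow> complex"
    and i :: "('a \<Rightarrow> complex) \<Rightarrow> ('a \<Rightarrow> complex)"
  assumes "comm_group M"
    and "finite (carrier M)"
    and "c \<in> dual M"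
    and "char_mult c c = char_one"
    and "bij_betw i (dual M - {c}) (dual M - {char_one})"
    and "\<forall>x\<in>dual M - {c}. i x = char_mult x (i (char_inv x))"
    and "\<forall>\<alpha>\<in>carrier M. \<forall>\<beta>\<in>carrier M.
           J \<alpha> \<beta> = (1 / of_nat (card (carrier M))) *
             (\<Sum>x\<in>dual M - {c}. i x \<alpha> * char_mult (i x) (char_inv x) \<beta>)"
  shows "\<forall>\<alpha>\<in>carrier M. \<forall>\<beta>\<in>carrier M.
           J \<alpha> \<beta> = (1 / of_nat (card (carrier M))) *
             (\<Sum>(x, y)\<in>{(x, y). x \<in> dual M \<and> y \<in> dual M \<and>
                   F_oplus c i (Some x) (Some y) = Some char_one}. x \<alpha> * y \<beta>)"
proof -
  have i_dual: "i ` (dual M - {c}) \<subseteq> dual M"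
    using assms(5) by (auto simp: bij_betw_def)
  have "(\<Sum>(x, y)\<in>{(x, y). x \<in> dual M \<and> y \<in> dual M \<and>
                   F_oplus c i (Some x) (Some y) = Some char_one}. x \<alpha> * y \<beta>)
      = (\<Sum>z\<in>dual M - {c}. i z \<alpha> * char_mult (i z) (char_inv z) \<beta>)" for \<alpha> \<beta>
    using sum.reindex[OF inj_on_F_oplus_eq_one_param[OF i_dual], where g = "\<lambda>(x, y). x \<alpha> * y \<beta>"]
    by (simp add: F_oplus_eq_one_pairs[OF i_dual])
  then show ?thesis
    using assms(7) by simp
qed

end
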